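(* Consider a single-item auction setting with a feature space $\mathcal{Z}$, $n$ buyers each with unit demand and a single seller with supply $\lambda > 0$ and cost $c = 0$. Conditioned on each feature vector $z$, the buyers' bids $b_1,\dots,b_n$ are independent with $b_i \sim F_i^z$. For a pricing policy $p:\mathcal{Z}\to\mathbb{R}$ the clearing loss is $$\ell^c(p,z,\mathbf{b},c) = \sum_{i=1}^n \max\{b_i - p(z),0\} + \lambda \max\{p(z)-c,0\}.$$ Let $p$ be the pricing policy minimizing the expected clearing loss (i.e., for each $z$, $p(z)$ solves $\sum_{i=1}^n (1-F_i^z(p(z))) = \lambda$). Let $b^{(1)} = \max_i b_i$. Then the expected social welfare $\mathbb{E}[{\sf SW}] = \mathbb{E}[b^{(1)}\,\mathbf{1}[b^{(1)} \ge p]]$ under $p$ is at least $(1-e^{-\lambda})\,\mathbb{E}[b^{(1)}]$, i.e., at least a $1-e^{-\lambda}$ fraction of the optimal social welfare, which is obtained by setting no reserve.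
   Context: $\mathbf{1}[\cdot]$ is the indicator function. Social welfare is the value of the highest bid when the item is sold and $0$ otherwise. *)

theory Defs
  imports "HOL-Probability.Probability"
begin

text \<open>Bid profiles of n buyers are functions b :: nat => real, restricted to indices i < n.\<close>

definition highest_bid :: "nat \<Rightarrow> (nat \<Rightarrow> real) \<Rightarrow> real" where
  "highest_bid n b = Max (b ` {..<n})"

definition social_welfare :: "nat \<Rightarrow> real \<Rightarrow> (nat \<Rightarrow> real) \<Rightarrow> real" where
  "social_welfare n pr b = (if highest_bid n b \<ge> pr then highest_bid n b else 0)"

definition clearing_loss :: "nat \<Rightarrow> real \<Rightarrow> real \<Rightarrow> (nat \<Rightarrow> real) \<Rightarrow> real \<Rightarrow> real" where
  "clearing_loss n lam pr b c = (\<Sum>i<n. max (b i - pr) 0) + lam * max (pr - c) 0"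

definition cdf_of :: "real measure \<Rightarrow> real \<Rightarrow> real" where
  "cdf_of M x = measure M {..x}"

end

theory Submission
  imports Defs
begin

text \<open>If every bid is at most the price p, nobody buys; by independence this happens with
  probability \<open>\<Prod>i. F\<^sub>i(p) \<le> exp (- \<Sum>i. (1 - F\<^sub>i(p))) = e\<^sup>-\<^sup>\<lambda>\<close>, so the item is sold with
  probability at least \<open>1 - e\<^sup>-\<^sup>\<lambda>\<close>. For a price p > 0 the welfare is
  \<open>p \<cdot> P(sold) + E[(b\<^sup>(\<^sup>1\<^sup>) - p)\<^sup>+]\<close>, whereas \<open>E[b\<^sup>(\<^sup>1\<^sup>)] \<le> p + E[(b\<^sup>(\<^sup>1\<^sup>) - p)\<^sup>+]\<close>; comparing the
  two terms separately gives the bound for every feature vector, and it survives integrating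
  over the features.\<close>

text \<open>No measurability is required, so this applies to the outer integral over features,
  whose integrand is not known to be measurable.\<close>
lemma nn_integral_cmult_le:
  "c * integral\<^sup>N M f \<le> (\<integral>\<^sup>+ x. c * f x \<partial>M)"
  unfolding nn_integral_def SUP_mult_left_ennreal
proof (rule SUP_least)
  fix g assume g: "g \<in> {g. simple_function M g \<and> g \<le> f}"
  then have "c * integral\<^sup>S M g = integral\<^sup>S M (\<lambda>x. c * g x)" by simp
  also have "\<dots> \<le> (SUP g \<in> {g. simple_function M g \<and> g \<le> (\<lambda>x. c * f x)}. integral\<^sup>S M g)"
    using g by (intro SUP_upper) (auto simp: le_fun_def intro: mult_left_mono)
  finally show "c * integral\<^sup>S M g \<le> (SUP g \<in> {g. simple_function M g \<and> g \<le> (\<lambda>x. c * f x)}. integral\<^sup>S M g)" .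
qed

lemma prod_le_exp_neg_sum:
  fixes x :: "'i \<Rightarrow> real"
  assumes "finite I" and "\<And>i. i \<in> I \<Longrightarrow> 0 \<le> x i"
  shows "(\<Prod>i\<in>I. x i) \<le> exp (- (\<Sum>i\<in>I. 1 - x i))"
proof -
  have "(\<Prod>i\<in>I. x i) \<le> (\<Prod>i\<in>I. exp (x i - 1))"
    using assms(2) exp_ge_add_one_self by (intro prod_mono) (smt (verit))
  also have "\<dots> = exp (- (\<Sum>i\<in>I. 1 - x i))"
    using assms(1) by (simp add: exp_sum sum_negf[symmetric])
  finally show ?thesis .
qed

lemma measure_PiM_PiE:
  assumes "finite I" and "\<And>i. i \<in> I \<Longrightarrow> prob_space (M i)"
    and "\<And>i. i \<in> I \<Longrightarrow> A i \<in> sets (M i)"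
  shows "measure (PiM I M) (PiE I A) = (\<Prod>i\<in>I. measure (M i) (A i))"
proof -
  define M' where "M' i = (if i \<in> I then M i else count_space {undefined})" for i
  interpret M': prob_space "M' i" for i
    using assms(2) by (cases "i \<in> I") (auto simp: M'_def intro!: prob_spaceI)
  interpret finite_product_prob_space M' I
    by unfold_locales (rule assms(1))
  have "PiM I M = PiM I M'"
    by (intro PiM_cong) (auto simp: M'_def)
  moreover have "A i \<in> sets (M' i)" if "i \<in> I" for i
    using assms(3) that by (simp add: M'_def)
  ultimately have "measure (PiM I M) (PiE I A) = (\<Prod>i\<in>I. measure (M' i) (A i))"
    using prob_times[of A] by simp
  also have "\<dots> = (\<Prod>i\<in>I. measure (M i) (A i))"
    by (intro prod.cong) (auto simp: M'_def)
  finally show ?thesis .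
qed

lemma highest_bid_borel_measurable:
  assumes "\<And>i. i < n \<Longrightarrow> sets (M i) = sets borel"
  shows "highest_bid n \<in> borel_measurable (PiM {..<n} M)"
proof -
  have "(\<lambda>b. b i) \<in> borel_measurable (PiM {..<n} M)" if "i < n" for i
    using measurable_component_singleton[of i "{..<n}" M] that assms measurable_cong_sets
    by (metis lessThan_iff)
  then show ?thesis
    unfolding highest_bid_def by (intro borel_measurable_Max) auto
qed

lemma prob_highest_bid_ge:
  assumes "\<And>i. i < n \<Longrightarrow> prob_space (M i) \<and> sets (M i) = sets borel"
  shows "1 - (\<Prod>i<n. cdf_of (M i) pr)
           \<le> measure (PiM {..<n} M) {b \<in> space (PiM {..<n} M). pr \<le> highest_bid n b}"
    (is "_ \<le> measure ?P ?A")
proof -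
  interpret P: prob_space ?P
    using assms by (intro prob_space_PiM) auto
  define B where "B = PiE {..<n} (\<lambda>_. {..pr})"
  have B_sets: "B \<in> sets ?P"
    unfolding B_def using assms by (intro sets_PiM_I_finite) auto
  have "space ?P - B \<subseteq> ?A"
  proof
    fix b assume b: "b \<in> space ?P - B"
    have "pr \<le> highest_bid n b"
    proof (rule ccontr)
      assume "\<not> pr \<le> highest_bid n b"
      then have "\<forall>i<n. b i \<le> pr"
        unfolding highest_bid_def by (smt (verit) Max_ge finite_imageI finite_lessThan imageI lessThan_iff)
      then show False
        using b by (auto simp: B_def space_PiM PiE_def)
    qed
    then show "b \<in> ?A" using b by simp
  qed
  moreover have "highest_bid n \<in> borel_measurable ?P"
    using assms by (intro highest_bid_borel_measurable) simp
  then have "?A \<in> sets ?P"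
    by measurable
  ultimately have "measure ?P (space ?P - B) \<le> measure ?P ?A"
    by (rule P.finite_measure_mono)
  then have "1 - measure ?P B \<le> measure ?P ?A"
    by (simp add: P.prob_compl[OF B_sets])
  also have "measure ?P B = (\<Prod>i<n. cdf_of (M i) pr)"
    unfolding B_def cdf_of_def using assms by (subst measure_PiM_PiE) auto
  finally show ?thesis .
qed

lemma posted_price_welfare_ge:
  fixes X :: "'a \<Rightarrow> real"
  assumes "prob_space P" and X: "X \<in> borel_measurable P"
    and "0 \<le> q" and q: "q \<le> measure P {x \<in> space P. pr \<le> X x}"
  shows "ennreal q * (\<integral>\<^sup>+ x. ennreal (X x) \<partial>P)
           \<le> (\<integral>\<^sup>+ x. ennreal (if pr \<le> X x then X x else 0) \<partial>P)"
proof -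
  interpret prob_space P by (rule assms(1))
  have q_le_1: "ennreal q \<le> 1"
    using order_trans[OF q prob_le_1] by (simp add: ennreal_le_1)
  show ?thesis
  proof (cases "pr \<le> 0")
    case True
    then have "(\<integral>\<^sup>+ x. ennreal (if pr \<le> X x then X x else 0) \<partial>P) = (\<integral>\<^sup>+ x. ennreal (X x) \<partial>P)"
      by (intro nn_integral_cong) (auto simp: ennreal_neg)
    with q_le_1 show ?thesis
      using mult_right_mono[of "ennreal q" 1] by fastforce
  next
    case False
    define A where "A = {x \<in> space P. pr \<le> X x}"
    define excess where "excess = (\<integral>\<^sup>+ x. ennreal (X x - pr) \<partial>P)"
    have A_sets: "A \<in> sets P"
      unfolding A_def using X by measurable
    have "(\<integral>\<^sup>+ x. ennreal (if pr \<le> X x then X x else 0) \<partial>P)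
        = (\<integral>\<^sup>+ x. ennreal pr * indicator A x + ennreal (X x - pr) \<partial>P)"
      using False by (intro nn_integral_cong)
        (auto simp: A_def indicator_def ennreal_plus[symmetric] ennreal_neg)
    also have "\<dots> = ennreal pr * emeasure P A + excess"
      unfolding excess_def using A_sets X
      by (subst nn_integral_add) (auto simp: nn_integral_cmult_indicator)
    finally have welfare: "(\<integral>\<^sup>+ x. ennreal (if pr \<le> X x then X x else 0) \<partial>P)
        = ennreal pr * emeasure P A + excess" .
    have "(\<integral>\<^sup>+ x. ennreal (X x) \<partial>P) \<le> (\<integral>\<^sup>+ x. ennreal pr + ennreal (X x - pr) \<partial>P)"
    proof (intro nn_integral_mono)
      fix x
      show "ennreal (X x) \<le> ennreal pr + ennreal (X x - pr)"
        using False by (cases "X x \<le> pr")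
          (auto simp: ennreal_plus[symmetric] ennreal_neg intro: order_trans[OF _ add_increasing2])
    qed
    also have "\<dots> = ennreal pr + excess"
      unfolding excess_def using X by (subst nn_integral_add) (auto simp: emeasure_space_1)
    finally have "ennreal q * (\<integral>\<^sup>+ x. ennreal (X x) \<partial>P) \<le> ennreal q * ennreal pr + ennreal q * excess"
      by (metis distrib_left mult_left_mono zero_le)
    also have "\<dots> \<le> ennreal pr * emeasure P A + excess"
    proof (intro add_mono)
      have "ennreal q \<le> emeasure P A"
        using q by (simp add: A_def emeasure_eq_measure ennreal_leI)
      then show "ennreal q * ennreal pr \<le> ennreal pr * emeasure P A"
        by (simp add: mult.commute mult_left_mono)
      show "ennreal q * excess \<le> excess"
        using q_le_1 mult_right_mono[of "ennreal q" 1 excess] by simp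
    qed
    finally show ?thesis
      unfolding welfare .
  qed
qed

lemma expected_welfare_ge:
  assumes M: "\<And>i. i < n \<Longrightarrow> prob_space (M i) \<and> sets (M i) = sets borel"
    and lam: "(\<Sum>i<n. 1 - cdf_of (M i) pr) = lam"
  shows "ennreal (1 - exp (- lam)) * (\<integral>\<^sup>+ b. ennreal (highest_bid n b) \<partial>PiM {..<n} M)
           \<le> (\<integral>\<^sup>+ b. ennreal (social_welfare n pr b) \<partial>PiM {..<n} M)"
proof -
  have lam_nonneg: "0 \<le> lam"
    unfolding lam[symmetric] cdf_of_def using M
    by (intro sum_nonneg) (simp add: prob_space.prob_le_1)
  have "1 - exp (- lam) \<le> 1 - (\<Prod>i<n. cdf_of (M i) pr)"
    using prod_le_exp_neg_sum[of "{..<n}" "\<lambda>i. cdf_of (M i) pr"] unfolding lam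
    by (simp add: cdf_of_def)
  also have "\<dots> \<le> measure (PiM {..<n} M) {b \<in> space (PiM {..<n} M). pr \<le> highest_bid n b}"
    using M by (rule prob_highest_bid_ge)
  finally show ?thesis
    unfolding social_welfare_def using M lam_nonneg
    by (intro posted_price_welfare_ge prob_space_PiM highest_bid_borel_measurable) auto
qed

theorem mainTheorem3:
  fixes D :: "'z measure" and F :: "'z \<Rightarrow> nat \<Rightarrow> real measure"
    and n :: nat and lam :: real and p :: "'z \<Rightarrow> real"
  assumes "prob_space D"
    and "n \<ge> 1"
    and "lam > 0"
    and "\<forall>z\<in>space D. \<forall>i<n. prob_space (F z i) \<and> sets (F z i) = sets borel"
    and "\<forall>z\<in>space D. \<forall>i<n. AE x in F z i. x \<ge> 0"
    and "\<forall>z\<in>space D. (\<Sum>i<n. 1 - cdf_of (F z i) (p z)) = lam"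
  shows "(\<integral>\<^sup>+ z. (\<integral>\<^sup>+ b. ennreal (social_welfare n (p z) b) \<partial>(PiM {..<n} (F z))) \<partial>D)
           \<ge> ennreal (1 - exp (- lam)) *
             (\<integral>\<^sup>+ z. (\<integral>\<^sup>+ b. ennreal (highest_bid n b) \<partial>(PiM {..<n} (F z))) \<partial>D)"
proof -
  have "ennreal (1 - exp (- lam)) *
             (\<integral>\<^sup>+ z. (\<integral>\<^sup>+ b. ennreal (highest_bid n b) \<partial>(PiM {..<n} (F z))) \<partial>D)
      \<le> (\<integral>\<^sup>+ z. ennreal (1 - exp (- lam)) * (\<integral>\<^sup>+ b. ennreal (highest_bid n b) \<partial>(PiM {..<n} (F z))) \<partial>D)"
    by (rule nn_integral_cmult_le)
  also have "\<dots> \<le> (\<integral>\<^sup>+ z. (\<integral>\<^sup>+ b. ennreal (social_welfare n (p z) b) \<partial>(PiM {..<n} (F z))) \<partial>D)"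
    using assms(4,6) by (intro nn_integral_mono expected_welfare_ge) auto
  finally show ?thesis .
qed

end
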